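(* Let $n\ge 3$, let $g:[1,\lfloor n/2\rfloor]\to\mathbb{R}$ be strictly decreasing and strictly convex, and let $A$ be a set of $m$ vertices of $C_n$. Then $A$ is a minimizer of $E_g$ (on $C_n$) if and only if $A$ is maximally even.
   Context: The cycle $C_n$ has vertex set $\{0,\dots,n-1\}$ with $i$ adjacent to $i+1\bmod n$, and $\lfloor n/2\rfloor$ is its diameter. For a finite simple connected graph $G$, $d(u,v)$ is the shortest-path distance, and for a set $A$ of vertices, $E_g(A)=\sum_{\{u,v\}\subseteq A,\,u\ne v} g(d(u,v))$ (sum over unordered pairs; $E_g(A)=0$ if $|A|\le1$). $A$ is a minimizer of a function $F$ on subsets of $V(G)$ if $F(A)=\min\{F(B): B\subseteq V(G), |B|=|A|\}$. The clockwise distance $d^*(u,v)$ is the least non-negative integer congruent to $v-u$ mod $n$. For $A=\{a_0<\dots<a_{m-1}\}$, $\mathrm{span}_A(a_i,a_j)$ is the least positive integer congruent to $j-i$ mod $m$, and $\sigma^*_k(A)$ is the multiset $[\,d^*(u,v): u,v\in A, u\neq v, \mathrm{span}_A(u,v)=k\,]$. $A$ is maximally even if for each $1\le k\le m-1$ the set of values of $\sigma^*_k(A)$ is a single integer or two consecutive integers. *)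

theory Defs
  imports Complex_Main "HOL-Number_Theory.Cong"
begin

definition walk :: "('a \<Rightarrow> 'a \<Rightarrow> bool) \<Rightarrow> 'a \<Rightarrow> 'a \<Rightarrow> nat \<Rightarrow> bool" where
  "walk E u v k \<longleftrightarrow> (\<exists>p :: nat \<Rightarrow> 'a. p 0 = u \<and> p k = v \<and> (\<forall>i<k. E (p i) (p (Suc i))))"

definition graph_dist :: "('a \<Rightarrow> 'a \<Rightarrow> bool) \<Rightarrow> 'a \<Rightarrow> 'a \<Rightarrow> nat" where
  "graph_dist E u v = (LEAST k. walk E u v k)"

definition cycle_adj :: "nat \<Rightarrow> nat \<Rightarrow> nat \<Rightarrow> bool" where
  "cycle_adj n i j \<longleftrightarrow> i < n \<and> j < n \<and> (j = (i + 1) mod n \<or> i = (j + 1) mod n)"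

definition cyc_dist :: "nat \<Rightarrow> nat \<Rightarrow> nat \<Rightarrow> nat" where
  "cyc_dist n u v = graph_dist (cycle_adj n) u v"

definition energy :: "nat \<Rightarrow> (nat \<Rightarrow> real) \<Rightarrow> nat set \<Rightarrow> real" where
  "energy n g A = (\<Sum>(u, v) \<in> {(u, v). u \<in> A \<and> v \<in> A \<and> u < v}. g (cyc_dist n u v))"

definition is_minimizer :: "nat \<Rightarrow> (nat \<Rightarrow> real) \<Rightarrow> nat set \<Rightarrow> bool" where
  "is_minimizer n g A \<longleftrightarrow> A \<subseteq> {0..<n} \<and>
     (\<forall>B. B \<subseteq> {0..<n} \<and> card B = card A \<longrightarrow> energy n g A \<le> energy n g B)"

definition cw_dist :: "nat \<Rightarrow> nat \<Rightarrow> nat \<Rightarrow> nat" where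
  "cw_dist n u v = (LEAST d. [int d = int v - int u] (mod int n))"

(* index i of a = a_i in the increasing enumeration of A *)
definition idx :: "nat set \<Rightarrow> nat \<Rightarrow> nat" where
  "idx A a = card {x \<in> A. x < a}"

definition span :: "nat set \<Rightarrow> nat \<Rightarrow> nat \<Rightarrow> nat" where
  "span A u v = (LEAST k. k > 0 \<and> [int k = int (idx A v) - int (idx A u)] (mod int (card A)))"

(* set of values of the multiset sigma*_k(A) *)
definition sigma_vals :: "nat \<Rightarrow> nat set \<Rightarrow> nat \<Rightarrow> nat set" where
  "sigma_vals n A k = {cw_dist n u v | u v. u \<in> A \<and> v \<in> A \<and> u \<noteq> v \<and> span A u v = k}"

definition maximally_even :: "nat \<Rightarrow> nat set \<Rightarrow> bool" where
  "maximally_even n A \<longleftrightarrow>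
     (\<forall>k. 1 \<le> k \<and> k \<le> card A - 1 \<longrightarrow>
        (\<exists>c. sigma_vals n A k = {c} \<or> sigma_vals n A k = {c, c + 1}))"

end

theory Submission
  imports Defs
begin

text \<open>
  List A as a_0 < ... < a_(m-1) and put h x = g (min x (n - x)), so that
  g (d u v) = h (d* u v). Grouping the ordered pairs of A by their span k gives
  2 E_g(A) = sum over k and i of h (x_(k,i)), where x_(k,i) is the clockwise distance
  from a_i to a_(i+k). For fixed k these distances lie in [1, n - 1] and sum to k n,
  and h is strictly convex there, so by a discrete Jensen inequality the inner sum is
  at least its value when every x_(k,i) is floor (k n / m) or ceil (k n / m), with
  equality only then. This bound depends on m alone and is attained by
  {floor (i n / m) | i < m}; hence the minimizers are exactly the sets attaining it
  for every k, which are the maximally even sets.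
\<close>

definition cw_diff :: "nat \<Rightarrow> nat \<Rightarrow> nat \<Rightarrow> nat" where
  "cw_diff n u v = (if u \<le> v then v - u else v + n - u)"

lemma cw_diff_less: "v < n \<Longrightarrow> cw_diff n u v < n"
  by (auto simp: cw_diff_def)

lemma int_cw_diff:
  "u < n \<Longrightarrow> int (cw_diff n u v) = int v - int u + (if u \<le> v then 0 else int n)"
  by (simp add: cw_diff_def)

lemma cw_diff_cong: "u < n \<Longrightarrow> [int (cw_diff n u v) = int v - int u] (mod int n)"
  by (simp add: int_cw_diff cong_def)

lemma le_of_cong_of_less:
  assumes "d < n" "[int d = int d'] (mod int n)"
  shows "d \<le> d'"
proof -
  have "int d = int d' mod int n"
    using assms by (simp add: cong_def)
  also have "\<dots> \<le> int d'"
    by (simp add: zmod_le_nonneg_dividend)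
  finally show ?thesis by simp
qed

lemma cw_dist_eq_cw_diff:
  assumes "u < n" "v < n"
  shows "cw_dist n u v = cw_diff n u v"
  unfolding cw_dist_def
proof (rule Least_equality)
  show "[int (cw_diff n u v) = int v - int u] (mod int n)"
    using assms(1) by (rule cw_diff_cong)
next
  fix d assume "[int d = int v - int u] (mod int n)"
  with cw_diff_cong[OF assms(1)] show "cw_diff n u v \<le> d"
    by (metis cw_diff_less[OF assms(2)] cong_sym cong_trans le_of_cong_of_less)
qed

lemma cycle_adj_cases:
  assumes "cycle_adj n x y"
  shows "x < n \<and> y < n \<and> (y = x + 1 \<or> x + 1 = n \<and> y = 0 \<or> x = y + 1 \<or> y + 1 = n \<and> x = 0)"
proof -
  have "Suc i mod n = (if Suc i < n then Suc i else 0)" if "i < n" for i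
    using that by (metis Suc_lessI mod_less mod_self)
  with assms show ?thesis
    unfolding cycle_adj_def by (auto split: if_splits)
qed

lemma walk_length_ge_cw_diff:
  assumes "walk (cycle_adj n) u v k" "u < n"
  shows "min (cw_diff n u v) (cw_diff n v u) \<le> k"
  using assms(1)
proof (induction k arbitrary: v)
  case 0
  then show ?case by (auto simp: walk_def cw_diff_def)
next
  case (Suc k)
  then obtain p where p: "p 0 = u" "p (Suc k) = v" "\<forall>i<Suc k. cycle_adj n (p i) (p (Suc i))"
    unfolding walk_def by blast
  have "walk (cycle_adj n) u (p k) k"
    unfolding walk_def using p by auto
  with Suc.IH have "min (cw_diff n u (p k)) (cw_diff n (p k) u) \<le> k" .
  moreover have "cycle_adj n (p k) v"
    using p by auto
  ultimately show ?case
    using cycle_adj_cases[of n "p k" v] assms(2) unfolding cw_diff_def by (auto split: if_splits)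
qed

lemma walk_cw_diff:
  assumes "u < n" "v < n"
  shows "walk (cycle_adj n) u v (cw_diff n u v)"
  unfolding walk_def
proof (intro exI[of _ "\<lambda>i. (u + i) mod n"] conjI allI impI)
  show "(u + 0) mod n = u" "(u + cw_diff n u v) mod n = v"
    using assms by (auto simp: cw_diff_def)
  fix i
  have "(u + Suc i) mod n = ((u + i) mod n + 1) mod n"
    by (simp add: mod_Suc_eq)
  then show "cycle_adj n ((u + i) mod n) ((u + Suc i) mod n)"
    using assms unfolding cycle_adj_def by auto
qed

lemma walk_reverse:
  assumes "walk (cycle_adj n) v u k"
  shows "walk (cycle_adj n) u v k"
proof -
  obtain p where p: "p 0 = v" "p k = u" "\<forall>i<k. cycle_adj n (p i) (p (Suc i))"
    using assms unfolding walk_def by blast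
  show ?thesis
    unfolding walk_def
  proof (intro exI[of _ "\<lambda>i. p (k - i)"] conjI allI impI)
    show "p (k - 0) = u" "p (k - k) = v"
      using p by simp_all
    fix i assume "i < k"
    with p have "cycle_adj n (p (k - Suc i)) (p (Suc (k - Suc i)))" and "Suc (k - Suc i) = k - i"
      by auto
    then show "cycle_adj n (p (k - i)) (p (k - Suc i))"
      unfolding cycle_adj_def by auto
  qed
qed

lemma cyc_dist_eq_min_cw_diff:
  assumes "u < n" "v < n"
  shows "cyc_dist n u v = min (cw_diff n u v) (cw_diff n v u)"
  unfolding cyc_dist_def graph_dist_def
proof (rule Least_equality)
  show "walk (cycle_adj n) u v (min (cw_diff n u v) (cw_diff n v u))"
    using walk_cw_diff[OF assms] walk_reverse[OF walk_cw_diff[OF assms(2,1)]]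
    by (simp add: min_def)
  show "\<And>k. walk (cycle_adj n) u v k \<Longrightarrow> min (cw_diff n u v) (cw_diff n v u) \<le> k"
    using walk_length_ge_cw_diff assms(1) by blast
qed

lemma cyc_dist_commute: "u < n \<Longrightarrow> v < n \<Longrightarrow> cyc_dist n u v = cyc_dist n v u"
  by (simp add: cyc_dist_eq_min_cw_diff min.commute)

definition cyc_profile :: "nat \<Rightarrow> (nat \<Rightarrow> real) \<Rightarrow> nat \<Rightarrow> real" where
  "cyc_profile n g x = g (min x (n - x))"

lemma g_cyc_dist_eq_cyc_profile:
  assumes "u < n" "v < n" "u \<noteq> v"
  shows "g (cyc_dist n u v) = cyc_profile n g (cw_diff n u v)"
proof -
  have "cyc_dist n u v = min (cw_diff n u v) (n - cw_diff n u v)"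
    using assms by (auto simp: cyc_dist_eq_min_cw_diff cw_diff_def)
  then show ?thesis
    by (simp add: cyc_profile_def)
qed

lemma add_mod_eq_if:
  fixes i k m :: nat
  assumes "i < m" "k < m"
  shows "(i + k) mod m = (if i + k < m then i + k else i + k - m)"
  using assms by (simp add: mod_if)

lemma bij_betw_add_mod: "bij_betw (\<lambda>i::nat. (i + k) mod m) {0..<m} {0..<m}"
proof (rule bij_betw_imageI)
  show inj: "inj_on (\<lambda>i. (i + k) mod m) {0..<m}"
  proof (rule inj_onI)
    fix x y assume "x \<in> {0..<m}" "y \<in> {0..<m}" "(x + k) mod m = (y + k) mod m"
    then have "[x = y] (mod m)" and "x < m" "y < m"
      by (simp_all add: cong_def[symmetric] cong_add_rcancel_nat)
    then show "x = y"
      by (simp add: cong_def)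
  qed
  show "(\<lambda>i. (i + k) mod m) ` {0..<m} = {0..<m}"
    by (rule endo_inj_surj[OF _ _ inj]) auto
qed

definition enumerates :: "nat set \<Rightarrow> nat \<Rightarrow> (nat \<Rightarrow> nat) \<Rightarrow> bool" where
  "enumerates A m a \<longleftrightarrow> strict_mono_on {0..<m} a \<and> A = a ` {0..<m}"

lemma enumerates_less_iff:
  "enumerates A m a \<Longrightarrow> i < m \<Longrightarrow> j < m \<Longrightarrow> a i < a j \<longleftrightarrow> i < j"
  unfolding enumerates_def by (simp add: strict_mono_on_less[of "{0..<m}"])

lemma enumerates_eq_iff:
  "enumerates A m a \<Longrightarrow> i < m \<Longrightarrow> j < m \<Longrightarrow> a i = a j \<longleftrightarrow> i = j"
  using enumerates_less_iff[of A m a i j] enumerates_less_iff[of A m a j i]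
  by (cases i j rule: linorder_cases) auto

lemma enumerates_inj_on: "enumerates A m a \<Longrightarrow> inj_on a {0..<m}"
  unfolding enumerates_def by (simp add: strict_mono_on_imp_inj_on)

lemma enumerates_mem: "enumerates A m a \<Longrightarrow> i < m \<Longrightarrow> a i \<in> A"
  unfolding enumerates_def by auto

lemma enumerates_card: "enumerates A m a \<Longrightarrow> card A = m"
  unfolding enumerates_def by (simp add: card_image strict_mono_on_imp_inj_on)

lemma enumerates_sorted_list_of_set:
  assumes "finite A"
  shows "enumerates A (card A) (\<lambda>i. sorted_list_of_set A ! i)"
  unfolding enumerates_def
proof
  show "strict_mono_on {0..<card A} (\<lambda>i. sorted_list_of_set A ! i)"
    using sorted_wrt_nth_less[OF strict_sorted_list_of_set[of A]] assms
    by (auto intro: strict_mono_onI)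
  show "A = (\<lambda>i. sorted_list_of_set A ! i) ` {0..<card A}"
  proof -
    have "set (sorted_list_of_set A) = (\<lambda>i. sorted_list_of_set A ! i) ` {0..<length (sorted_list_of_set A)}"
      by (auto simp: set_conv_nth)
    with assms show ?thesis
      by simp
  qed
qed

lemma idx_enumerates:
  assumes "enumerates A m a" "i < m"
  shows "idx A (a i) = i"
proof -
  have "{x \<in> A. x < a i} = a ` {0..<i}"
  proof (intro equalityI subsetI)
    fix x assume "x \<in> {x \<in> A. x < a i}"
    then obtain j where "j < m" "x = a j" "a j < a i"
      using assms(1) unfolding enumerates_def by auto
    then show "x \<in> a ` {0..<i}"
      using enumerates_less_iff[OF assms(1) _ assms(2)] by auto
  next
    fix x assume "x \<in> a ` {0..<i}"
    then show "x \<in> {x \<in> A. x < a i}"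
      using assms enumerates_mem enumerates_less_iff by auto
  qed
  moreover have "inj_on a {0..<i}"
    using enumerates_inj_on[OF assms(1)] assms(2) by (auto intro: inj_on_subset)
  ultimately show ?thesis
    unfolding idx_def by (simp add: card_image)
qed

lemma cw_diff_add_mod:
  fixes i k m :: nat
  assumes "i < m" "k < m"
  shows "cw_diff m i ((i + k) mod m) = k"
  using assms by (auto simp: add_mod_eq_if cw_diff_def)

lemma add_cw_diff_mod:
  fixes i j m :: nat
  assumes "i < m" "j < m"
  shows "(i + cw_diff m i j) mod m = j"
  using assms by (auto simp: cw_diff_def)

lemma add_mod_neq:
  fixes i k m :: nat
  assumes "i < m" "0 < k" "k < m"
  shows "(i + k) mod m \<noteq> i"
  using assms by (auto simp: add_mod_eq_if)

lemma span_enumerates: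
  assumes a: "enumerates A m a" and "i < m" "j < m" "i \<noteq> j"
  shows "span A (a i) (a j) = cw_diff m i j"
  unfolding span_def idx_enumerates[OF a \<open>i < m\<close>] idx_enumerates[OF a \<open>j < m\<close>] enumerates_card[OF a]
proof (rule Least_equality)
  show "0 < cw_diff m i j \<and> [int (cw_diff m i j) = int j - int i] (mod int m)"
    using assms(2-4) cw_diff_cong[of i m j] by (auto simp: cw_diff_def)
next
  fix k assume "0 < k \<and> [int k = int j - int i] (mod int m)"
  with cw_diff_cong[of i m j] \<open>i < m\<close> show "cw_diff m i j \<le> k"
    by (metis cw_diff_less[OF \<open>j < m\<close>] cong_sym cong_trans le_of_cong_of_less)
qed

text \<open>For \<open>i < m\<close> the values \<open>gap n m a k i\<close> form the multiset \<open>\<sigma>*_k(A)\<close>.\<close>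

definition gap :: "nat \<Rightarrow> nat \<Rightarrow> (nat \<Rightarrow> nat) \<Rightarrow> nat \<Rightarrow> nat \<Rightarrow> nat" where
  "gap n m a k i = cw_diff n (a i) (a ((i + k) mod m))"

lemma sigma_vals_eq_gaps:
  assumes a: "enumerates A m a" and A: "A \<subseteq> {0..<n}" and k: "0 < k" "k < m"
  shows "sigma_vals n A k = gap n m a k ` {0..<m}"
proof (intro equalityI subsetI)
  fix x assume "x \<in> sigma_vals n A k"
  then obtain u v where uv: "x = cw_dist n u v" "u \<in> A" "v \<in> A" "u \<noteq> v" "span A u v = k"
    unfolding sigma_vals_def by blast
  have "u \<in> a ` {0..<m}" "v \<in> a ` {0..<m}"
    using uv a by (simp_all add: enumerates_def)
  then obtain i j where ij: "i < m" "j < m" "u = a i" "v = a j"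
    by auto
  with uv(4) have "i \<noteq> j"
    by auto
  then have "(i + k) mod m = j"
    using uv(5) ij span_enumerates[OF a ij(1,2)] add_cw_diff_mod[OF ij(1,2)] by simp
  moreover have "u < n" "v < n"
    using uv(2,3) A by auto
  ultimately have "x = gap n m a k i"
    using uv(1) ij by (simp add: gap_def cw_dist_eq_cw_diff)
  then show "x \<in> gap n m a k ` {0..<m}"
    using ij(1) by auto
next
  fix x assume "x \<in> gap n m a k ` {0..<m}"
  then obtain i where i: "i < m" "x = gap n m a k i"
    by auto
  define j where "j = (i + k) mod m"
  have j: "j < m" "i \<noteq> j"
    using i add_mod_neq[OF i(1) k] k by (auto simp: j_def)
  have "span A (a i) (a j) = k"
    using span_enumerates[OF a i(1) j] cw_diff_add_mod[OF i(1) k(2)] by (simp add: j_def)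
  moreover have "x = cw_dist n (a i) (a j)" "a i \<noteq> a j" "a i \<in> A" "a j \<in> A"
    using i j A enumerates_mem[OF a] enumerates_eq_iff[OF a]
    by (auto simp: gap_def j_def cw_dist_eq_cw_diff subset_iff)
  ultimately show "x \<in> sigma_vals n A k"
    unfolding sigma_vals_def by blast
qed

lemma gap_bounds:
  assumes a: "enumerates A m a" and A: "A \<subseteq> {0..<n}" and "0 < k" "k < m" "i < m"
  shows "1 \<le> gap n m a k i \<and> gap n m a k i \<le> n - 1"
proof -
  have "a i \<noteq> a ((i + k) mod m)"
    using assms add_mod_neq[of i m k] enumerates_eq_iff[OF a, of i "(i + k) mod m"] by simp
  moreover have "a i < n" "a ((i + k) mod m) < n"
    using assms enumerates_mem[OF a] by (auto simp: subset_iff)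
  ultimately show ?thesis
    by (auto simp: gap_def cw_diff_def)
qed

lemma int_gap:
  assumes a: "enumerates A m a" and A: "A \<subseteq> {0..<n}" and "k < m" "i < m"
  shows "int (gap n m a k i) = int (a ((i + k) mod m)) - int (a i) + (if m \<le> i + k then int n else 0)"
proof -
  have "a i \<le> a ((i + k) mod m) \<longleftrightarrow> i + k < m"
    using assms enumerates_less_iff[OF a, of "(i + k) mod m" i] by (auto simp: add_mod_eq_if not_le)
  moreover have "a i < n"
    using assms enumerates_mem[OF a, of i] by auto
  ultimately show ?thesis
    by (simp add: gap_def int_cw_diff)
qed

text \<open>The gaps of span \<open>k\<close> wind \<open>k\<close> times around the cycle.\<close>

lemma sum_gaps:
  assumes a: "enumerates A m a" and A: "A \<subseteq> {0..<n}" and k: "k < m"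
  shows "(\<Sum>i<m. gap n m a k i) = k * n"
proof -
  have "int (\<Sum>i<m. gap n m a k i)
      = (\<Sum>i<m. int (a ((i + k) mod m))) - (\<Sum>i<m. int (a i)) + (\<Sum>i<m. if m \<le> i + k then int n else 0)"
    using int_gap[OF a A k] by (simp add: sum.distrib sum_subtractf)
  also have "(\<Sum>i<m. int (a ((i + k) mod m))) = (\<Sum>i<m. int (a i))"
    using sum.reindex_bij_betw[OF bij_betw_add_mod, of "\<lambda>i. int (a i)" k m]
    by (simp add: atLeast0LessThan)
  also have "(\<Sum>i<m. if m \<le> i + k then int n else 0) = (\<Sum>i\<in>{m - k..<m}. int n)"
    using k by (intro sum.mono_neutral_cong_right) auto
  finally have "int (\<Sum>i<m. gap n m a k i) = int (k * n)"
    using k by simp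
  then show ?thesis
    by (simp only: of_nat_eq_iff)
qed

lemma sum_ordered_pairs_eq_twice_sum_pairs:
  fixes f :: "nat \<Rightarrow> nat \<Rightarrow> real"
  assumes "finite A" and f: "\<And>u v. u \<in> A \<Longrightarrow> v \<in> A \<Longrightarrow> f u v = f v u"
  shows "(\<Sum>(u, v) \<in> {(u, v). u \<in> A \<and> v \<in> A \<and> u \<noteq> v}. f u v)
       = 2 * (\<Sum>(u, v) \<in> {(u, v). u \<in> A \<and> v \<in> A \<and> u < v}. f u v)"
proof -
  define P where "P = {(u, v). u \<in> A \<and> v \<in> A \<and> u < v}"
  have "finite P"
    using assms(1) by (auto intro: finite_subset[of _ "A \<times> A"] simp: P_def)
  have "{(u, v). u \<in> A \<and> v \<in> A \<and> u \<noteq> v} = P \<union> prod.swap ` P"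
    by (auto simp: P_def image_iff)
  then have "(\<Sum>(u, v) \<in> {(u, v). u \<in> A \<and> v \<in> A \<and> u \<noteq> v}. f u v)
      = (\<Sum>(u, v) \<in> P. f u v) + (\<Sum>(u, v) \<in> prod.swap ` P. f u v)"
    using \<open>finite P\<close> by (auto simp: P_def intro: sum.union_disjoint)
  also have "(\<Sum>(u, v) \<in> prod.swap ` P. f u v) = (\<Sum>(u, v) \<in> P. f u v)"
    by (simp add: sum.reindex case_prod_beta) (rule sum.cong, auto simp: P_def f)
  finally show ?thesis
    by (simp add: P_def)
qed

lemma sum_ordered_pairs_enumerates:
  fixes f :: "nat \<Rightarrow> nat \<Rightarrow> real"
  assumes a: "enumerates A m a"
  shows "(\<Sum>(u, v) \<in> {(u, v). u \<in> A \<and> v \<in> A \<and> u \<noteq> v}. f u v)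
       = (\<Sum>(i, k) \<in> {0..<m} \<times> {1..<m}. f (a i) (a ((i + k) mod m)))"
proof (rule sum.reindex_bij_witness[where i = "\<lambda>(i, k). (a i, a ((i + k) mod m))"
      and j = "\<lambda>(u, v). (idx A u, cw_diff m (idx A u) (idx A v))"])
  fix p assume "p \<in> {(u, v). u \<in> A \<and> v \<in> A \<and> u \<noteq> v}"
  then obtain u v where uv: "p = (u, v)" "u \<in> a ` {0..<m}" "v \<in> a ` {0..<m}" "u \<noteq> v"
    using a by (auto simp: enumerates_def)
  then obtain i j where "u = a i" "v = a j" "i < m" "j < m"
    by auto
  with uv have p: "p = (a i, a j)" "i < m" "j < m" "i \<noteq> j"
    by auto
  then show "(\<lambda>(i, k). (a i, a ((i + k) mod m))) ((\<lambda>(u, v). (idx A u, cw_diff m (idx A u) (idx A v))) p) = p"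
    and "(\<lambda>(u, v). (idx A u, cw_diff m (idx A u) (idx A v))) p \<in> {0..<m} \<times> {1..<m}"
    and "(\<lambda>(i, k). f (a i) (a ((i + k) mod m))) ((\<lambda>(u, v). (idx A u, cw_diff m (idx A u) (idx A v))) p)
        = (\<lambda>(u, v). f u v) p"
    by (auto simp: idx_enumerates[OF a] add_cw_diff_mod cw_diff_def)
next
  fix q assume "q \<in> {0..<m} \<times> {1..<m}"
  then obtain i k where q: "q = (i, k)" "i < m" "0 < k" "k < m"
    by auto
  then have j: "(i + k) mod m < m" "(i + k) mod m \<noteq> i"
    using add_mod_neq by auto
  show "(\<lambda>(u, v). (idx A u, cw_diff m (idx A u) (idx A v))) ((\<lambda>(i, k). (a i, a ((i + k) mod m))) q) = q"
    using q j by (simp add: idx_enumerates[OF a] cw_diff_add_mod)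
  show "(\<lambda>(i, k). (a i, a ((i + k) mod m))) q \<in> {(u, v). u \<in> A \<and> v \<in> A \<and> u \<noteq> v}"
    using q j enumerates_mem[OF a] enumerates_eq_iff[OF a] by auto
qed

lemma twice_energy_eq_sum_gaps:
  assumes a: "enumerates A m a" and A: "A \<subseteq> {0..<n}"
  shows "2 * energy n g A = (\<Sum>k\<in>{1..<m}. \<Sum>i<m. cyc_profile n g (gap n m a k i))"
proof -
  have An: "\<And>x. x \<in> A \<Longrightarrow> x < n"
    using A by auto
  have "2 * energy n g A = (\<Sum>(u, v) \<in> {(u, v). u \<in> A \<and> v \<in> A \<and> u \<noteq> v}. g (cyc_dist n u v))"
    unfolding energy_def using finite_subset[OF A]
    by (intro sum_ordered_pairs_eq_twice_sum_pairs[symmetric]) (auto simp: An cyc_dist_commute)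
  also have "\<dots> = (\<Sum>(i, k) \<in> {0..<m} \<times> {1..<m}. g (cyc_dist n (a i) (a ((i + k) mod m))))"
    using a by (rule sum_ordered_pairs_enumerates)
  also have "\<dots> = (\<Sum>(i, k) \<in> {0..<m} \<times> {1..<m}. cyc_profile n g (gap n m a k i))"
  proof (rule sum.cong[OF refl])
    fix q assume "q \<in> {0..<m} \<times> {1..<m}"
    then obtain i k where q: "q = (i, k)" "i < m" "0 < k" "k < m"
      by auto
    then have "(i + k) mod m < m" "a i \<noteq> a ((i + k) mod m)"
      using add_mod_neq[of i m k] enumerates_eq_iff[OF a, of i "(i + k) mod m"] by auto
    with q show "(\<lambda>(i, k). g (cyc_dist n (a i) (a ((i + k) mod m)))) q
        = (\<lambda>(i, k). cyc_profile n g (gap n m a k i)) q"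
      unfolding gap_def using enumerates_mem[OF a] An by (auto intro: g_cyc_dist_eq_cyc_profile)
  qed
  also have "\<dots> = (\<Sum>k\<in>{1..<m}. \<Sum>i<m. cyc_profile n g (gap n m a k i))"
    by (simp add: sum.cartesian_product[symmetric] atLeast0LessThan) (rule sum.swap)
  finally show ?thesis .
qed

definition discrete_strict_convex_on :: "nat \<Rightarrow> nat \<Rightarrow> (nat \<Rightarrow> real) \<Rightarrow> bool" where
  "discrete_strict_convex_on lo hi h \<longleftrightarrow> (\<forall>y. lo < y \<and> y < hi \<longrightarrow> 2 * h y < h (y - 1) + h (y + 1))"

lemma increment_strict_mono:
  assumes h: "discrete_strict_convex_on lo hi h" and "lo \<le> i" "i < j" "j < hi"
  shows "h (i + 1) - h i < h (j + 1) - h j"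
  using \<open>i < j\<close> \<open>j < hi\<close>
proof (induction j)
  case (Suc j)
  have "2 * h (Suc j) < h j + h (Suc j + 1)"
    using h \<open>lo \<le> i\<close> Suc.prems unfolding discrete_strict_convex_on_def
    by (auto dest: spec[of _ "Suc j"])
  moreover have "j = i \<or> h (i + 1) - h i < h (j + 1) - h j"
    using Suc by (cases "j = i") auto
  ultimately show ?case
    by auto
qed simp

lemma above_tangent:
  assumes h: "discrete_strict_convex_on lo hi h"
    and c: "lo \<le> c" "c < hi" and y: "lo \<le> y" "y \<le> hi"
  shows "h c + (real y - real c) * (h (c + 1) - h c) \<le> h y \<and>
    (y \<noteq> c \<and> y \<noteq> c + 1 \<longrightarrow> h c + (real y - real c) * (h (c + 1) - h c) < h y)"
proof (cases "c \<le> y")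
  case True
  have tele: "h y - h c = (\<Sum>t\<in>{c..<y}. h (t + 1) - h t)"
    using True by (simp add: sum_Suc_diff')
  have slope: "h (c + 1) - h c \<le> h (t + 1) - h t" if "t \<in> {c..<y}" for t
    using that increment_strict_mono[OF h c(1), of t] y by (cases "t = c") auto
  have "(\<Sum>t\<in>{c..<y}. h (c + 1) - h c) \<le> h y - h c"
    unfolding tele by (rule sum_mono) (rule slope)
  moreover have "(\<Sum>t\<in>{c..<y}. h (c + 1) - h c) < h y - h c" if "c + 1 < y"
    unfolding tele
  proof (rule sum_strict_mono_ex1)
    show "\<exists>t\<in>{c..<y}. h (c + 1) - h c < h (t + 1) - h t"
      using that increment_strict_mono[OF h c(1), of "c + 1"] y by (intro bexI[of _ "c + 1"]) auto
  qed (use slope in auto)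
  ultimately show ?thesis
    using True by (auto simp: of_nat_diff algebra_simps)
next
  case False
  have tele: "h c - h y = (\<Sum>t\<in>{y..<c}. h (t + 1) - h t)"
    using False by (simp add: sum_Suc_diff')
  have "(\<Sum>t\<in>{y..<c}. h (t + 1) - h t) < (\<Sum>t\<in>{y..<c}. h (c + 1) - h c)"
    using False y c by (intro sum_strict_mono increment_strict_mono[OF h]) auto
  then show ?thesis
    using False tele by (auto simp: of_nat_diff algebra_simps)
qed

text \<open>The value of \<open>\<Sum>i<m. h (x i)\<close> when the \<open>x i\<close> sum to \<open>S\<close> and all equal
  \<open>S div m\<close> or \<open>S div m + 1\<close>.\<close>

definition balanced_value :: "(nat \<Rightarrow> real) \<Rightarrow> nat \<Rightarrow> nat \<Rightarrow> real" where
  "balanced_value h m S = real (m - S mod m) * h (S div m) + real (S mod m) * h (S div m + 1)"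

lemma all_eq_if_sum_eq_bound:
  fixes x :: "nat \<Rightarrow> nat"
  assumes "\<forall>i<m. x i \<le> b" "(\<Sum>i<m. x i) = m * b"
  shows "\<forall>i<m. x i = b"
proof (rule ccontr)
  assume "\<not> (\<forall>i<m. x i = b)"
  then obtain i where "i < m" "x i < b"
    using assms(1) le_neq_implies_less by blast
  then have "(\<Sum>i<m. x i) < (\<Sum>i<m. b)"
    using assms(1) by (intro sum_strict_mono_ex1) auto
  with assms(2) show False
    by simp
qed

lemma sum_tangent_eq_balanced_value:
  fixes h :: "nat \<Rightarrow> real" and x :: "nat \<Rightarrow> nat"
  assumes "0 < m" "(\<Sum>i<m. x i) = S"
  shows "(\<Sum>i<m. h (S div m) + (real (x i) - real (S div m)) * (h (S div m + 1) - h (S div m)))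
    = balanced_value h m S"
proof -
  define c where "c = S div m"
  have "real S = real m * real c + real (S mod m)"
    unfolding c_def by (metis div_mult_mod_eq mult.commute of_nat_add of_nat_mult)
  moreover have "S mod m \<le> m"
    using \<open>0 < m\<close> by (simp add: less_imp_le)
  moreover have "(\<Sum>i<m. h c + (real (x i) - real c) * (h (c + 1) - h c))
      = real m * (h c - real c * (h (c + 1) - h c)) + real S * (h (c + 1) - h c)"
    by (simp add: algebra_simps sum.distrib sum_distrib_left sum_subtractf assms(2)[symmetric])
  ultimately show ?thesis
    by (simp add: balanced_value_def c_def of_nat_diff algebra_simps)
qed

lemma discrete_jensen:
  assumes h: "discrete_strict_convex_on lo hi h" and "0 < m"
    and x: "\<forall>i<m. lo \<le> x i \<and> x i \<le> hi" and S: "(\<Sum>i<m. x i) = S"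
  shows "balanced_value h m S \<le> (\<Sum>i<m. h (x i)) \<and>
    ((\<Sum>i<m. h (x i)) = balanced_value h m S \<longleftrightarrow> (\<forall>i<m. x i = S div m \<or> x i = S div m + 1))"
proof -
  define c where "c = S div m"
  have "m * lo \<le> S" "S \<le> m * hi"
    using S x sum_mono[of "{..<m}" "\<lambda>_. lo" x] sum_mono[of "{..<m}" x "\<lambda>_. hi"] by auto
  then have c: "lo \<le> c" "c \<le> hi"
    using \<open>0 < m\<close> div_le_mono[of S "m * hi" m]
    by (auto simp: c_def less_eq_div_iff_mult_less_eq mult.commute)
  show ?thesis
  proof (cases "c = hi")
    case True
    then have "S = m * hi"
      using \<open>S \<le> m * hi\<close> div_mult_mod_eq[of S m] unfolding c_def by (metis le_add1 le_antisym mult.commute)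
    then have "\<forall>i<m. x i = hi"
      using x S by (intro all_eq_if_sum_eq_bound) auto
    then show ?thesis
      using \<open>S = m * hi\<close> \<open>0 < m\<close> by (simp add: balanced_value_def)
  next
    case False
    define L where "L y = h c + (real y - real c) * (h (c + 1) - h c)" for y
    have tangent: "L (x i) \<le> h (x i) \<and> (x i \<noteq> c \<and> x i \<noteq> c + 1 \<longrightarrow> L (x i) < h (x i))"
      if "i < m" for i
      unfolding L_def using above_tangent[OF h c(1)] c False x that by simp
    have sum_L: "(\<Sum>i<m. L (x i)) = balanced_value h m S"
      unfolding L_def c_def using \<open>0 < m\<close> S by (rule sum_tangent_eq_balanced_value)
    have le: "(\<Sum>i<m. L (x i)) \<le> (\<Sum>i<m. h (x i))"
      using tangent by (intro sum_mono) auto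
    have "(\<Sum>i<m. h (x i)) = (\<Sum>i<m. L (x i)) \<longleftrightarrow> (\<forall>i<m. x i = c \<or> x i = c + 1)"
    proof
      assume eq: "(\<Sum>i<m. h (x i)) = (\<Sum>i<m. L (x i))"
      show "\<forall>i<m. x i = c \<or> x i = c + 1"
      proof (rule ccontr)
        assume "\<not> (\<forall>i<m. x i = c \<or> x i = c + 1)"
        then obtain i where "i < m" "x i \<noteq> c" "x i \<noteq> c + 1"
          by blast
        then have "(\<Sum>i<m. L (x i)) < (\<Sum>i<m. h (x i))"
          using tangent by (intro sum_strict_mono_ex1) auto
        with eq show False
          by simp
      qed
    next
      assume "\<forall>i<m. x i = c \<or> x i = c + 1"
      then show "(\<Sum>i<m. h (x i)) = (\<Sum>i<m. L (x i))"
        by (intro sum.cong) (auto simp: L_def)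
    qed
    with le sum_L show ?thesis
      by (simp add: c_def)
  qed
qed

lemma discrete_strict_convex_on_cyc_profile:
  assumes dec: "\<forall>k. 1 \<le> k \<and> k + 1 \<le> n div 2 \<longrightarrow> g (k + 1) < g k"
    and cvx: "\<forall>k. 2 \<le> k \<and> k + 1 \<le> n div 2 \<longrightarrow> 2 * g k < g (k - 1) + g (k + 1)"
  shows "discrete_strict_convex_on 1 (n - 1) (cyc_profile n g)"
  unfolding discrete_strict_convex_on_def
proof (intro allI impI, elim conjE)
  fix y assume y: "1 < y" "y < n - 1"
  define p where "p = n div 2"
  have n: "n = 2 * p \<or> n = 2 * p + 1"
    unfolding p_def by arith
  consider "y + 1 \<le> p" | "n - p \<le> y - 1" | "p \<le> y" "y \<le> n - p"
    by linarith
  then show "2 * cyc_profile n g y < cyc_profile n g (y - 1) + cyc_profile n g (y + 1)"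
  proof cases
    case 1
    then have "2 * g y < g (y - 1) + g (y + 1)"
      using cvx y by (auto simp: p_def)
    with 1 n show ?thesis
      by (auto simp: cyc_profile_def min_def)
  next
    case 2
    define z where "z = n - y"
    have "2 \<le> z" "z + 1 \<le> n div 2"
      using 2 y n by (auto simp: p_def z_def)
    then have "2 * g z < g (z - 1) + g (z + 1)"
      using cvx by blast
    moreover have "min (y - 1) (n - (y - 1)) = z + 1" "min y (n - y) = z"
      "min (y + 1) (n - (y + 1)) = z - 1"
      using 2 n y by (auto simp: z_def)
    ultimately show ?thesis
      unfolding cyc_profile_def by (simp only:)
  next
    case 3
    have "2 \<le> p"
      using 3 y n by auto
    then have gp: "g p < g (p - 1)"
      using dec by (auto simp: p_def dest: spec[of _ "p - 1"])
    from 3 n have "y = p \<or> (n = 2 * p + 1 \<and> y = p + 1)"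
      by auto
    then show ?thesis
      using n gp \<open>2 \<le> p\<close> by (auto simp: cyc_profile_def min_def)
  qed
qed

lemma two_values_are_floor_ceil:
  fixes x :: "nat \<Rightarrow> nat"
  assumes "0 < m" "\<forall>i<m. x i = c \<or> x i = c + 1" "(\<Sum>i<m. x i) = S"
  shows "\<forall>i<m. x i = S div m \<or> x i = S div m + 1"
proof -
  have "(\<Sum>i<m. c) \<le> (\<Sum>i<m. x i)" "(\<Sum>i<m. x i) \<le> (\<Sum>i<m. c + 1)"
    by (rule sum_mono, use assms(2) in force)+
  then have "m * c \<le> S" "S \<le> m * (c + 1)"
    using assms(3) by simp_all
  show ?thesis
  proof (cases "S = m * (c + 1)")
    case True
    then have "\<forall>i<m. x i = c + 1"
      using assms(2,3) by (intro all_eq_if_sum_eq_bound) auto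
    with True \<open>0 < m\<close> show ?thesis
      by simp
  next
    case False
    with \<open>m * c \<le> S\<close> \<open>S \<le> m * (c + 1)\<close> have "S div m = c"
      by (intro div_nat_eqI) auto
    with assms(2) show ?thesis
      by simp
  qed
qed

definition balanced_gaps :: "nat \<Rightarrow> nat \<Rightarrow> (nat \<Rightarrow> nat) \<Rightarrow> bool" where
  "balanced_gaps n m a \<longleftrightarrow>
    (\<forall>k\<in>{1..<m}. \<forall>i<m. gap n m a k i = k * n div m \<or> gap n m a k i = k * n div m + 1)"

lemma maximally_even_iff_balanced_gaps:
  assumes a: "enumerates A m a" and A: "A \<subseteq> {0..<n}"
  shows "maximally_even n A \<longleftrightarrow> balanced_gaps n m a"
proof -
  have "(\<exists>c. sigma_vals n A k = {c} \<or> sigma_vals n A k = {c, c + 1}) \<longleftrightarrow>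
      (\<forall>i<m. gap n m a k i = k * n div m \<or> gap n m a k i = k * n div m + 1)"
    if k: "0 < k" "k < m" for k
  proof
    assume "\<exists>c. sigma_vals n A k = {c} \<or> sigma_vals n A k = {c, c + 1}"
    then obtain c where "sigma_vals n A k \<subseteq> {c, c + 1}"
      by blast
    then have "\<forall>i<m. gap n m a k i = c \<or> gap n m a k i = c + 1"
      unfolding sigma_vals_eq_gaps[OF a A k] by (simp add: image_subset_iff)
    then show "\<forall>i<m. gap n m a k i = k * n div m \<or> gap n m a k i = k * n div m + 1"
      using sum_gaps[OF a A k(2)] k by (intro two_values_are_floor_ceil) auto
  next
    assume "\<forall>i<m. gap n m a k i = k * n div m \<or> gap n m a k i = k * n div m + 1"
    then have "sigma_vals n A k \<subseteq> {k * n div m, k * n div m + 1}" "sigma_vals n A k \<noteq> {}"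
      unfolding sigma_vals_eq_gaps[OF a A k] using k by auto
    then show "\<exists>c. sigma_vals n A k = {c} \<or> sigma_vals n A k = {c, c + 1}"
      by blast
  qed
  moreover have "1 \<le> k \<and> k \<le> card A - 1 \<longleftrightarrow> k \<in> {1..<m}" for k
    using enumerates_card[OF a] by auto
  ultimately show ?thesis
    unfolding maximally_even_def balanced_gaps_def by (simp add: Ball_def)
qed

definition energy_bound :: "nat \<Rightarrow> (nat \<Rightarrow> real) \<Rightarrow> nat \<Rightarrow> real" where
  "energy_bound n g m = (\<Sum>k\<in>{1..<m}. balanced_value (cyc_profile n g) m (k * n))"

lemma energy_bound_le_twice_energy_eq_iff:
  assumes h: "discrete_strict_convex_on 1 (n - 1) (cyc_profile n g)"
    and a: "enumerates A m a" and A: "A \<subseteq> {0..<n}"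
  shows "energy_bound n g m \<le> 2 * energy n g A \<and>
    (2 * energy n g A = energy_bound n g m \<longleftrightarrow> balanced_gaps n m a)"
proof -
  define f where "f k = (\<Sum>i<m. cyc_profile n g (gap n m a k i))" for k
  define b where "b k = balanced_value (cyc_profile n g) m (k * n)" for k
  have jensen: "b k \<le> f k \<and>
      (f k = b k \<longleftrightarrow> (\<forall>i<m. gap n m a k i = k * n div m \<or> gap n m a k i = k * n div m + 1))"
    if "k \<in> {1..<m}" for k
  proof -
    have "0 < k" "k < m"
      using that by auto
    then show ?thesis
      unfolding f_def b_def using gap_bounds[OF a A] sum_gaps[OF a A]
      by (intro discrete_jensen[OF h]) auto
  qed
  have E: "2 * energy n g A = sum f {1..<m}"
    unfolding f_def by (rule twice_energy_eq_sum_gaps[OF a A])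
  have le: "sum b {1..<m} \<le> sum f {1..<m}"
    using jensen by (intro sum_mono) blast
  have "sum f {1..<m} = sum b {1..<m} \<longleftrightarrow> (\<forall>k\<in>{1..<m}. f k = b k)"
  proof
    assume "sum f {1..<m} = sum b {1..<m}"
    then show "\<forall>k\<in>{1..<m}. f k = b k"
      using jensen sum_mono_inv[of b "{1..<m}" f] by (metis finite_atLeastLessThan)
  qed simp
  also have "\<dots> \<longleftrightarrow> balanced_gaps n m a"
    unfolding balanced_gaps_def using jensen by (simp add: Ball_def)
  finally show ?thesis
    using E le by (simp add: energy_bound_def b_def)
qed

lemma energy_bound_le_twice_energy:
  assumes h: "discrete_strict_convex_on 1 (n - 1) (cyc_profile n g)" and A: "A \<subseteq> {0..<n}"
  shows "energy_bound n g (card A) \<le> 2 * energy n g A"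
proof -
  obtain a where "enumerates A (card A) a"
    using enumerates_sorted_list_of_set finite_subset[OF A] by blast
  then show ?thesis
    using energy_bound_le_twice_energy_eq_iff[OF h _ A] by blast
qed

lemma twice_energy_eq_energy_bound_iff:
  assumes h: "discrete_strict_convex_on 1 (n - 1) (cyc_profile n g)" and A: "A \<subseteq> {0..<n}"
  shows "2 * energy n g A = energy_bound n g (card A) \<longleftrightarrow> maximally_even n A"
proof -
  obtain a where "enumerates A (card A) a"
    using enumerates_sorted_list_of_set finite_subset[OF A] by blast
  then show ?thesis
    using energy_bound_le_twice_energy_eq_iff[OF h _ A] maximally_even_iff_balanced_gaps[OF _ A] by blast
qed

definition even_set :: "nat \<Rightarrow> nat \<Rightarrow> nat set" where
  "even_set n m = (\<lambda>i. i * n div m) ` {0..<m}"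

lemma enumerates_even_set:
  assumes "m \<le> n"
  shows "enumerates (even_set n m) m (\<lambda>i. i * n div m)"
  unfolding enumerates_def even_set_def
proof (intro conjI strict_mono_onI refl)
  fix i j assume "i \<in> {0..<m}" "j \<in> {0..<m}" "i < j"
  then have "i * n + m \<le> j * n"
    using assms mult_le_mono1[of "i + 1" j n] by simp
  then have "(i * n + m) div m \<le> j * n div m"
    by (rule div_le_mono)
  with \<open>j \<in> {0..<m}\<close> show "i * n div m < j * n div m"
    by simp
qed

lemma even_set_subset:
  assumes "m \<le> n"
  shows "even_set n m \<subseteq> {0..<n}"
proof -
  have "i * n div m < n" if "i < m" for i
    using that assms by (intro less_mult_imp_div_less) (simp add: mult.commute)
  then show ?thesis
    unfolding even_set_def by auto
qed

lemma balanced_gaps_even_set: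
  assumes "m \<le> n"
  shows "balanced_gaps n m (\<lambda>i. i * n div m)"
  unfolding balanced_gaps_def
proof (intro ballI allI impI)
  fix k i assume k: "k \<in> {1..<m}" and i: "i < m"
  have "int (gap n m (\<lambda>i. i * n div m) k i) = int ((i * n + k * n) div m) - int (i * n div m)"
  proof (cases "i + k < m")
    case True
    then show ?thesis
      using int_gap[OF enumerates_even_set[OF assms] even_set_subset[OF assms], of k i] k i
      by (simp add: add_mod_eq_if add_mult_distrib)
  next
    case False
    then have "i * n + k * n = (i + k - m) * n + n * m"
      by (metis add_mult_distrib le_add_diff_inverse2 mult.commute not_less)
    then have "(i * n + k * n) div m = (i + k - m) * n div m + n"
      using i by simp
    then show ?thesis
      using False int_gap[OF enumerates_even_set[OF assms] even_set_subset[OF assms], of k i] k i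
      by (simp add: add_mod_eq_if)
  qed
  moreover have "(i * n + k * n) div m = i * n div m + k * n div m + (i * n mod m + k * n mod m) div m"
    by (rule div_add1_eq)
  moreover have "(i * n mod m + k * n mod m) div m < 2"
  proof (intro less_mult_imp_div_less)
    have "i * n mod m < m" "k * n mod m < m"
      using i by simp_all
    then show "i * n mod m + k * n mod m < 2 * m"
      by linarith
  qed
  ultimately show "gap n m (\<lambda>i. i * n div m) k i = k * n div m \<or>
      gap n m (\<lambda>i. i * n div m) k i = k * n div m + 1"
    by linarith
qed

lemma maximally_even_set_exists:
  assumes "m \<le> n"
  obtains W where "W \<subseteq> {0..<n}" "card W = m" "maximally_even n W"
proof
  show "even_set n m \<subseteq> {0..<n}"
    using assms by (rule even_set_subset)
  show "card (even_set n m) = m"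
    using enumerates_even_set[OF assms] by (rule enumerates_card)
  show "maximally_even n (even_set n m)"
    using maximally_even_iff_balanced_gaps[OF enumerates_even_set even_set_subset]
      balanced_gaps_even_set assms by blast
qed

lemma is_minimizer_iff_twice_energy_eq_bound:
  assumes h: "discrete_strict_convex_on 1 (n - 1) (cyc_profile n g)" and A: "A \<subseteq> {0..<n}"
  shows "is_minimizer n g A \<longleftrightarrow> 2 * energy n g A = energy_bound n g (card A)"
proof -
  have bound: "energy_bound n g (card A) \<le> 2 * energy n g B"
    if "B \<subseteq> {0..<n}" "card B = card A" for B
    using energy_bound_le_twice_energy[OF h that(1)] that(2) by simp
  have "card A \<le> n"
    using card_mono[OF _ A] by simp
  then obtain W where W: "W \<subseteq> {0..<n}" "card W = card A" "maximally_even n W"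
    by (rule maximally_even_set_exists)
  then have attained: "2 * energy n g W = energy_bound n g (card A)"
    using twice_energy_eq_energy_bound_iff[OF h W(1)] by simp
  show ?thesis
  proof
    assume "is_minimizer n g A"
    then have "energy n g A \<le> energy n g W"
      using W unfolding is_minimizer_def by blast
    with attained bound[OF A refl] show "2 * energy n g A = energy_bound n g (card A)"
      by linarith
  next
    assume eq: "2 * energy n g A = energy_bound n g (card A)"
    show "is_minimizer n g A"
      unfolding is_minimizer_def
    proof (intro conjI allI impI)
      fix B assume "B \<subseteq> {0..<n} \<and> card B = card A"
      with bound[of B] eq show "energy n g A \<le> energy n g B"
        by simp
    qed (rule A)
  qed
qed

theorem mainTheorem5:
  fixes n :: nat and g :: "nat \<Rightarrow> real" and A :: "nat set"
  assumes "n \<ge> 3"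
    and "\<forall>k. 1 \<le> k \<and> k + 1 \<le> n div 2 \<longrightarrow> g (k + 1) < g k"
    and "\<forall>k. 2 \<le> k \<and> k + 1 \<le> n div 2 \<longrightarrow> 2 * g k < g (k - 1) + g (k + 1)"
    and "A \<subseteq> {0..<n}"
  shows "is_minimizer n g A \<longleftrightarrow> maximally_even n A"
proof -
  have h: "discrete_strict_convex_on 1 (n - 1) (cyc_profile n g)"
    using assms(2,3) by (rule discrete_strict_convex_on_cyc_profile)
  show ?thesis
    using is_minimizer_iff_twice_energy_eq_bound[OF h assms(4)]
      twice_energy_eq_energy_bound_iff[OF h assms(4)] by simp
qed

end
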